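(* Let $X$ be a normal-variance mixture random variable with cumulative distribution function $F(x)=\int\Phi\big(\frac{x-\mu(v)}{\sigma(v)}\big)\,dF_v(v)$, where $F_v$ is the distribution of a mixing variable $V$ and $\mu(\cdot)$, $\sigma(\cdot)>0$ are functions, so that $\mu_V:=\mathrm{E}(X\mid V)=\mu(V)$ and $\sigma_V^2:=\mathrm{Var}(X\mid V)=\sigma(V)^2$. Let $y\in\mathbb{R}$ and define $$M(\mu,\sigma^2)=2\sigma\varphi\Big(\frac{\mu}{\sigma}\Big)+\mu\Big(2\Phi\Big(\frac{\mu}{\sigma}\Big)-1\Big).$$ Let $V_j^{(i)}$, $j=1,2$, $i=1,\dots,N$, be independent draws from $F_v$ and set $$\mathrm{CRPS}_N^{RB}(F,y)=\frac1N\sum_{i=1}^N\Big[M\big(\mu_{V_1^{(i)}}-y,\ \sigma^2_{V_1^{(i)}}\big)-\frac12 M\big(\mu_{V_1^{(i)}}-\mu_{V_2^{(i)}},\ \sigma^2_{V_1^{(i)}}+\sigma^2_{V_2^{(i)}}\big)\Big].$$ Then $\mathrm{E}(\mathrm{CRPS}_N^{RB}(F,y))=\mathrm{CRPS}(F,y)$ and $\mathrm{Var}(\mathrm{CRPS}_N^{RB}(F,y))\le\mathrm{Var}(\mathrm{CRPS}_N(F,y))$.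
   Context: $\Phi$ and $\varphi$ are the standard Gaussian CDF and density. The continuous ranked probability score is $\mathrm{CRPS}(F,y)=\mathrm{E}|Y^{(1)}-y|-\frac12\mathrm{E}|Y^{(1)}-Y^{(2)}|$ with $Y^{(1)},Y^{(2)}$ independent with distribution $F$. $\mathrm{CRPS}_N(F,y)$ is the plain Monte Carlo estimator $\frac1N\sum_{i=1}^N\big[|Y_1^{(i)}-y|-\frac12|Y_1^{(i)}-Y_2^{(i)}|\big]$ based on $N$ independent draws $Y_1^{(i)},Y_2^{(i)}$ ($i=1,\dots,N$, all mutually independent) from $F$. *)

theory Defs
  imports "HOL-Probability.Probability"
begin

definition std_phi :: "real \<Rightarrow> real" where
  "std_phi x = std_normal_density x"

definition std_Phi :: "real \<Rightarrow> real" where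
  "std_Phi x = measure (density lborel std_normal_density) {..x}"

definition Mfun :: "real \<Rightarrow> real \<Rightarrow> real" where
  "Mfun m s2 = 2 * sqrt s2 * std_phi (m / sqrt s2) + m * (2 * std_Phi (m / sqrt s2) - 1)"

definition crps :: "real measure \<Rightarrow> real \<Rightarrow> real" where
  "crps F y = (\<integral>x. \<bar>x - y\<bar> \<partial>F) - 1/2 * (\<integral>x. (\<integral>x'. \<bar>x - x'\<bar> \<partial>F) \<partial>F)"

definition draw_idx :: "nat \<Rightarrow> (nat \<times> nat) set" where
  "draw_idx N = {..<N} \<times> {1, 2}"

text \<open>Plain Monte Carlo estimator CRPS_N(F,y) as a function of the draws Y_j^(i) = w (i,j).\<close>
definition crps_N :: "nat \<Rightarrow> real \<Rightarrow> (nat \<times> nat \<Rightarrow> real) \<Rightarrow> real" where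
  "crps_N N y w = (1 / real N) * (\<Sum>i<N. \<bar>w (i,1) - y\<bar> - 1/2 * \<bar>w (i,1) - w (i,2)\<bar>)"

text \<open>Rao-Blackwellised estimator as a function of the draws V_j^(i) = w (i,j).\<close>
definition crps_N_RB :: "('v \<Rightarrow> real) \<Rightarrow> ('v \<Rightarrow> real) \<Rightarrow> nat \<Rightarrow> real \<Rightarrow> (nat \<times> nat \<Rightarrow> 'v) \<Rightarrow> real" where
  "crps_N_RB \<mu> \<sigma> N y w = (1 / real N) * (\<Sum>i<N.
      Mfun (\<mu> (w (i,1)) - y) ((\<sigma> (w (i,1)))\<^sup>2)
      - 1/2 * Mfun (\<mu> (w (i,1)) - \<mu> (w (i,2))) ((\<sigma> (w (i,1)))\<^sup>2 + (\<sigma> (w (i,2)))\<^sup>2))"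

definition expect :: "'a measure \<Rightarrow> ('a \<Rightarrow> real) \<Rightarrow> real" where
  "expect P X = (\<integral>w. X w \<partial>P)"

definition var_ext :: "'a measure \<Rightarrow> ('a \<Rightarrow> real) \<Rightarrow> ennreal" where
  "var_ext P X = (\<integral>\<^sup>+ w. ennreal ((X w - expect P X)\<^sup>2) \<partial>P)"

end

theory Submission
  imports Defs "HOL-Real_Asymp.Real_Asymp"
begin

text \<open>Realise a draw from \<open>F\<close> as \<open>Y = \<mu>(V) + \<sigma>(V) Z\<close> with \<open>Z\<close> standard normal and
  independent of \<open>V\<close>.  Given the mixing draws, the two summands of the plain estimator are
  absolute values of normal variables, \<open>|\<mu>(V\<^sub>1) - y + \<sigma>(V\<^sub>1) Z\<^sub>1|\<close> and
  \<open>|\<mu>(V\<^sub>1) - \<mu>(V\<^sub>2) + \<sigma>(V\<^sub>1) Z\<^sub>1 - \<sigma>(V\<^sub>2) Z\<^sub>2|\<close>, and \<open>E|X| = M(m, s\<^sup>2)\<close> for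
  \<open>X \<sim> N(m, s\<^sup>2)\<close>.  So the Rao--Blackwellised estimator is the conditional expectation of the
  plain one given the mixing draws: it inherits the mean \<open>CRPS(F, y)\<close> of the plain estimator, and
  by Jensen's inequality its variance is no larger.\<close>

section \<open>Independent samples\<close>

lemma distr_pair_snd:
  assumes "prob_space M" "prob_space N"
  shows "distr (M \<Otimes>\<^sub>M N) N snd = N"
proof (rule measure_eqI)
  interpret M: prob_space M by fact
  interpret N: prob_space N by fact
  fix A assume A: "A \<in> sets (distr (M \<Otimes>\<^sub>M N) N snd)"
  then have "emeasure (distr (M \<Otimes>\<^sub>M N) N snd) A = emeasure (M \<Otimes>\<^sub>M N) (space M \<times> A)"
    by (subst emeasure_distr)
       (auto simp: space_pair_measure dest: sets.sets_into_space intro!: arg_cong2[where f=emeasure])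
  also have "\<dots> = emeasure N A"
    using A by (subst N.emeasure_pair_measure_Times) (auto simp: M.emeasure_space_1)
  finally show "emeasure (distr (M \<Otimes>\<^sub>M N) N snd) A = emeasure N A" .
qed simp

lemma indep_var_fst_snd:
  assumes "prob_space M" "prob_space N"
  shows "prob_space.indep_var (M \<Otimes>\<^sub>M N) M fst N snd"
proof -
  interpret M: prob_space M by fact
  interpret N: prob_space N by fact
  interpret pair_prob_space M N ..
  have "distr (M \<Otimes>\<^sub>M N) (M \<Otimes>\<^sub>M N) (\<lambda>x. (fst x, snd x)) = M \<Otimes>\<^sub>M N"
    by (simp add: distr_id2)
  then show ?thesis
    using N.distr_pair_fst[of M] distr_pair_snd[OF assms]
    by (subst indep_var_distribution_eq) auto
qed

lemma has_bochner_integral_measure_preserving: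
  fixes f :: "'b \<Rightarrow> 'c::{banach, second_countable_topology}"
  assumes "g \<in> measurable M N" "distr M N g = N" and "has_bochner_integral N f c"
  shows "has_bochner_integral M (\<lambda>x. f (g x)) c"
proof -
  have f: "f \<in> borel_measurable N"
    using assms(3) by (rule borel_measurable_has_bochner_integral)
  have "has_bochner_integral (distr M N g) f c"
    using assms(2,3) by simp
  then show ?thesis
    by (simp add: has_bochner_integral_iff integrable_distr_eq[OF assms(1) f] integral_distr[OF assms(1) f])
qed

lemma finite_product_prob_space_const:
  assumes "finite I" "prob_space M"
  shows "finite_product_prob_space (\<lambda>_. M) I"
proof -
  interpret prob_space M by fact
  show ?thesis by unfold_locales (simp add: assms)
qed

lemma distr_PiM_two_components:
  assumes M: "prob_space M" and I: "finite I" "a \<in> I" "b \<in> I" "a \<noteq> b"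
  shows "distr (PiM I (\<lambda>_. M)) (M \<Otimes>\<^sub>M M) (\<lambda>z. (z a, z b)) = M \<Otimes>\<^sub>M M"
proof (rule pair_measure_eqI[symmetric])
  interpret M: prob_space M by (rule M)
  interpret P: finite_product_prob_space "\<lambda>_. M" I
    by (rule finite_product_prob_space_const[OF I(1) M])
  show "sigma_finite_measure M" "sigma_finite_measure M" by unfold_locales
  show "sets (M \<Otimes>\<^sub>M M) = sets (distr (PiM I (\<lambda>_. M)) (M \<Otimes>\<^sub>M M) (\<lambda>z. (z a, z b)))"
    by simp
  fix A B assume A: "A \<in> sets M" and B: "B \<in> sets M"
  let ?C = "\<lambda>k. if k = a then A else if k = b then B else space M"
  have "(\<lambda>z. (z a, z b)) -` (A \<times> B) \<inter> space (PiM I (\<lambda>_. M)) = PiE I ?C"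
    using I A B sets.sets_into_space[OF A] sets.sets_into_space[OF B]
    by (auto simp: space_PiM PiE_iff split: if_splits) (metis subsetD)
  then have "emeasure (distr (PiM I (\<lambda>_. M)) (M \<Otimes>\<^sub>M M) (\<lambda>z. (z a, z b))) (A \<times> B)
      = emeasure (PiM I (\<lambda>_. M)) (PiE I ?C)"
    using I A B by (subst emeasure_distr) auto
  also have "\<dots> = (\<Prod>k\<in>I. emeasure M (?C k))"
    using A B by (intro P.emeasure_PiM I) auto
  also have "\<dots> = (\<Prod>k\<in>{a, b}. emeasure M (?C k))"
    using I by (intro prod.mono_neutral_right) (auto simp: M.emeasure_space_1)
  also have "\<dots> = emeasure M A * emeasure M B"
    using I by simp
  finally show "emeasure M A * emeasure M B
      = emeasure (distr (PiM I (\<lambda>_. M)) (M \<Otimes>\<^sub>M M) (\<lambda>z. (z a, z b))) (A \<times> B)"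
    by simp
qed

lemma has_bochner_integral_PiM_component:
  fixes f :: "'a \<Rightarrow> 'b::{banach, second_countable_topology}"
  assumes "prob_space M" "a \<in> I" "has_bochner_integral M f c"
  shows "has_bochner_integral (PiM I (\<lambda>_. M)) (\<lambda>z. f (z a)) c"
  by (rule has_bochner_integral_measure_preserving[of "\<lambda>z. z a" _ M f])
     (use assms distr_PiM_component[of I "\<lambda>_. M" a] in auto)

lemma has_bochner_integral_PiM_two_components:
  fixes f :: "'a \<times> 'a \<Rightarrow> 'b::{banach, second_countable_topology}"
  assumes "prob_space M" "finite I" "a \<in> I" "b \<in> I" "a \<noteq> b"
    and "has_bochner_integral (M \<Otimes>\<^sub>M M) f c"
  shows "has_bochner_integral (PiM I (\<lambda>_. M)) (\<lambda>z. f (z a, z b)) c"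
  by (rule has_bochner_integral_measure_preserving[of "\<lambda>z. (z a, z b)" _ "M \<Otimes>\<^sub>M M" f])
     (use assms distr_PiM_two_components[of M I a b] in auto)

lemma measurable_PiM_pair_map:
  assumes h[measurable]: "h \<in> measurable (M1 \<Otimes>\<^sub>M M2) M"
  shows "(\<lambda>p. \<lambda>k\<in>I. h (fst p k, snd p k))
           \<in> measurable (PiM I (\<lambda>_. M1) \<Otimes>\<^sub>M PiM I (\<lambda>_. M2)) (PiM I (\<lambda>_. distr (M1 \<Otimes>\<^sub>M M2) M h))"
proof (rule measurable_restrict)
  fix k assume "k \<in> I"
  then have "(\<lambda>p. h (fst p k, snd p k)) \<in> measurable (PiM I (\<lambda>_. M1) \<Otimes>\<^sub>M PiM I (\<lambda>_. M2)) M"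
    by measurable
  then show "(\<lambda>p. h (fst p k, snd p k))
      \<in> measurable (PiM I (\<lambda>_. M1) \<Otimes>\<^sub>M PiM I (\<lambda>_. M2)) (distr (M1 \<Otimes>\<^sub>M M2) M h)"
    by (simp add: measurable_cong_sets[OF refl sets_distr])
qed

text \<open>Each fibre of a box \<open>\<Pi>\<^sub>E k\<in>I. A k\<close> is a box
  in the second factor, so Fubini reduces the claim to a product of one-dimensional identities.\<close>

lemma distr_PiM_pair_map:
  assumes M1: "prob_space M1" and M2: "prob_space M2" and I: "finite I"
    and h[measurable]: "h \<in> measurable (M1 \<Otimes>\<^sub>M M2) M"
  defines "F \<equiv> distr (M1 \<Otimes>\<^sub>M M2) M h"
  shows "distr (PiM I (\<lambda>_. M1) \<Otimes>\<^sub>M PiM I (\<lambda>_. M2)) (PiM I (\<lambda>_. F))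
           (\<lambda>p. \<lambda>k\<in>I. h (fst p k, snd p k)) = PiM I (\<lambda>_. F)"
proof -
  interpret M1: prob_space M1 by (rule M1)
  interpret M2: prob_space M2 by (rule M2)
  interpret K: pair_prob_space M1 M2 ..
  interpret P1: finite_product_prob_space "\<lambda>_. M1" I by (rule finite_product_prob_space_const[OF I M1])
  interpret P2: finite_product_prob_space "\<lambda>_. M2" I by (rule finite_product_prob_space_const[OF I M2])
  interpret PF: finite_product_prob_space "\<lambda>_. F" I
    by (rule finite_product_prob_space_const[OF I]) (simp add: F_def K.prob_space_distr)
  let ?\<Omega> = "PiM I (\<lambda>_. M1) \<Otimes>\<^sub>M PiM I (\<lambda>_. M2)"
  let ?T = "\<lambda>p. \<lambda>k\<in>I. h (fst p k, snd p k)"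
  have T[measurable]: "?T \<in> measurable ?\<Omega> (PiM I (\<lambda>_. F))"
    unfolding F_def by (rule measurable_PiM_pair_map[OF h])
  show ?thesis
  proof (rule PF.PiM_eqI[OF I])
    fix A assume A: "\<And>k. k \<in> I \<Longrightarrow> A k \<in> sets F"
    define S where "S k = h -` A k \<inter> space (M1 \<Otimes>\<^sub>M M2)" for k
    have S: "S k \<in> sets (M1 \<Otimes>\<^sub>M M2)" if "k \<in> I" for k
      using A[OF that] unfolding S_def F_def by measurable
    have box: "PiE I A \<in> sets (PiM I (\<lambda>_. F))"
      using A I by (intro sets_PiM_I_finite) auto
    have fibre: "Pair w -` (?T -` PiE I A \<inter> space ?\<Omega>) = PiE I (\<lambda>k. Pair (w k) -` S k)"
      if w: "w \<in> space (PiM I (\<lambda>_. M1))" for w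
      using w by (auto simp: S_def space_pair_measure space_PiM PiE_iff)
    have "emeasure (distr ?\<Omega> (PiM I (\<lambda>_. F)) ?T) (PiE I A) = emeasure ?\<Omega> (?T -` PiE I A \<inter> space ?\<Omega>)"
      using box by (rule emeasure_distr[OF T])
    also have "\<dots> = (\<integral>\<^sup>+ w. emeasure (PiM I (\<lambda>_. M2)) (Pair w -` (?T -` PiE I A \<inter> space ?\<Omega>)) \<partial>PiM I (\<lambda>_. M1))"
      using box by (intro P2.emeasure_pair_measure_alt measurable_sets[OF T])
    also have "\<dots> = (\<integral>\<^sup>+ w. (\<Prod>k\<in>I. emeasure M2 (Pair (w k) -` S k)) \<partial>PiM I (\<lambda>_. M1))"
      by (intro nn_integral_cong, unfold fibre, rule P2.emeasure_PiM[OF I], rule sets_Pair1[OF S])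
    also have "\<dots> = (\<Prod>k\<in>I. \<integral>\<^sup>+ v. emeasure M2 (Pair v -` S k) \<partial>M1)"
      using S by (intro P1.product_nn_integral_prod[OF I]) (auto intro!: M2.measurable_emeasure_Pair)
    also have "\<dots> = (\<Prod>k\<in>I. emeasure F (A k))"
    proof (rule prod.cong[OF refl])
      fix k assume k: "k \<in> I"
      have "(\<integral>\<^sup>+ v. emeasure M2 (Pair v -` S k) \<partial>M1) = emeasure (M1 \<Otimes>\<^sub>M M2) (S k)"
        by (rule M2.emeasure_pair_measure_alt[symmetric, OF S[OF k]])
      also have "\<dots> = emeasure F (A k)"
        using A[OF k] unfolding S_def F_def by (subst emeasure_distr) auto
      finally show "(\<integral>\<^sup>+ v. emeasure M2 (Pair v -` S k) \<partial>M1) = emeasure F (A k)" .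
    qed
    finally show "emeasure (distr ?\<Omega> (PiM I (\<lambda>_. F)) ?T) (PiE I A) = (\<Prod>k\<in>I. emeasure F (A k))" .
  qed simp
qed

section \<open>Absolute moments of normal variables\<close>

abbreviation std_normal :: "real measure" where
  "std_normal \<equiv> density lborel std_normal_density"

lemma prob_space_std_normal: "prob_space std_normal"
  using prob_space_normal_density[of 1 0] by simp

lemma std_normal_density_uminus: "std_normal_density (- x) = std_normal_density x"
  by (simp add: std_normal_density_def)

lemma integrable_std_normal_density_indicator:
  "A \<in> sets borel \<Longrightarrow> integrable lborel (\<lambda>z. std_normal_density z * indicator A z)"
  by (rule Bochner_Integration.integrable_bound[OF integrable_normal_density])
     (auto split: split_indicator)

lemma integrable_std_normal_first_moment_indicator:
  "A \<in> sets borel \<Longrightarrow> integrable lborel (\<lambda>z. std_normal_density z * z * indicator A z)"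
  by (rule Bochner_Integration.integrable_bound[OF integrable_std_normal_moment_abs[of 1]])
     (auto split: split_indicator simp: abs_mult)

lemma emeasure_std_normal_atMost: "emeasure std_normal {..c} = ennreal (std_Phi c)"
proof -
  interpret prob_space std_normal by (rule prob_space_std_normal)
  show ?thesis unfolding std_Phi_def by (simp add: emeasure_eq_measure)
qed

lemma std_Phi_nonneg: "0 \<le> std_Phi c"
  by (simp add: std_Phi_def)

lemma std_Phi_le_1: "std_Phi c \<le> 1"
proof -
  interpret prob_space std_normal by (rule prob_space_std_normal)
  show ?thesis unfolding std_Phi_def by simp
qed

lemma mono_std_Phi: "mono std_Phi"
proof -
  interpret prob_space std_normal by (rule prob_space_std_normal)
  show ?thesis unfolding std_Phi_def mono_def by (auto intro!: finite_measure_mono)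
qed

lemma borel_measurable_std_Phi[measurable]: "std_Phi \<in> borel_measurable borel"
  by (rule borel_measurable_mono[OF mono_std_Phi])

lemma std_Phi_eq_integral: "std_Phi t = (\<integral>z. std_normal_density z * indicator {..t} z \<partial>lborel)"
proof -
  have "emeasure std_normal {..t} = (\<integral>\<^sup>+z. ennreal (std_normal_density z * indicator {..t} z) \<partial>lborel)"
    by (subst emeasure_density) (auto intro!: nn_integral_cong split: split_indicator)
  also have "\<dots> = ennreal (\<integral>z. std_normal_density z * indicator {..t} z \<partial>lborel)"
    by (rule nn_integral_eq_integral)
       (auto intro!: integrable_std_normal_density_indicator split: split_indicator)
  finally show ?thesis
    by (simp add: emeasure_std_normal_atMost integral_nonneg_AE std_Phi_nonneg)
qed

lemma integral_std_normal_density_atLeast: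
  "(\<integral>z. std_normal_density z * indicator {t..} z \<partial>lborel) = 1 - std_Phi t"
proof -
  have "(\<integral>z. std_normal_density z * indicator {t..} z \<partial>lborel)
      = (\<integral>z. std_normal_density z * indicator {t<..} z \<partial>lborel)"
    by (rule integral_cong_AE) (auto intro!: AE_I'[where N="{t}"] split: split_indicator)
  also have "\<dots> + std_Phi t
      = (\<integral>z. std_normal_density z * indicator {t<..} z + std_normal_density z * indicator {..t} z \<partial>lborel)"
    unfolding std_Phi_eq_integral
    by (rule Bochner_Integration.integral_add[symmetric])
       (auto intro!: integrable_std_normal_density_indicator)
  also have "\<dots> = (\<integral>z. std_normal_density z \<partial>lborel)"
    by (rule Bochner_Integration.integral_cong) (auto split: split_indicator)
  finally show ?thesis by simp
qed

lemma integral_std_normal_first_moment_atLeast_nonneg: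
  assumes "t \<ge> 0"
  shows "(\<integral>z. std_normal_density z * z * indicator {t..} z \<partial>lborel) = std_normal_density t"
proof -
  have deriv: "DERIV (\<lambda>x. - std_normal_density x) x :> std_normal_density x * x" for x
    unfolding std_normal_density_def by (rule derivative_eq_intros refl | simp)+
  have lim: "((\<lambda>x. - std_normal_density x) \<longlongrightarrow> 0) at_top"
    unfolding std_normal_density_def by real_asymp
  have "(\<integral>\<^sup>+z. ennreal (std_normal_density z * z) * indicator {t..} z \<partial>lborel)
      = 0 - (- std_normal_density t)"
    by (rule nn_integral_FTC_atLeast[OF _ deriv _ lim]) (use assms in auto)
  then have "(\<integral>\<^sup>+z. ennreal (std_normal_density z * z * indicator {t..} z) \<partial>lborel)
      = ennreal (std_normal_density t)"
    by (simp add: indicator_mult_ennreal mult.commute)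
  then show ?thesis
    by (intro has_bochner_integral_integral_eq has_bochner_integral_nn_integral)
       (use assms in \<open>auto split: split_indicator\<close>)
qed

text \<open>For \<open>t < 0\<close> the truncated moment is reduced to the case \<open>-t > 0\<close>, using that
  the full first moment vanishes and that \<open>std_normal_density\<close> is even.\<close>

lemma integral_std_normal_first_moment_atLeast:
  "(\<integral>z. std_normal_density z * z * indicator {t..} z \<partial>lborel) = std_normal_density t"
proof (cases "t \<ge> 0")
  case True
  then show ?thesis by (rule integral_std_normal_first_moment_atLeast_nonneg)
next
  case False
  have "0 = (\<integral>z. std_normal_density z * z \<partial>lborel)"
    using integral_std_normal_moment_odd[of 0] by simp
  also have "\<dots> = (\<integral>z. std_normal_density z * z * indicator {t..} z \<partial>lborel)
      + (\<integral>z. std_normal_density z * z * indicator {..<t} z \<partial>lborel)"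
    by (subst Bochner_Integration.integral_add[symmetric])
       (auto intro!: integrable_std_normal_first_moment_indicator Bochner_Integration.integral_cong
             split: split_indicator)
  also have "(\<integral>z. std_normal_density z * z * indicator {..<t} z \<partial>lborel)
      = (\<integral>z. std_normal_density (- z) * (- z) * indicator {..<t} (- z) \<partial>lborel)"
    using lborel_integral_real_affine[of "-1" "\<lambda>z. std_normal_density z * z * indicator {..<t} z" 0]
    by simp
  also have "\<dots> = - (\<integral>z. std_normal_density z * z * indicator {-t<..} z \<partial>lborel)"
    by (subst integral_minus[symmetric])
       (auto intro!: Bochner_Integration.integral_cong simp: std_normal_density_uminus
             split: split_indicator)
  also have "(\<integral>z. std_normal_density z * z * indicator {-t<..} z \<partial>lborel)
      = (\<integral>z. std_normal_density z * z * indicator {-t..} z \<partial>lborel)"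
    by (rule integral_cong_AE) (auto intro!: AE_I'[where N="{-t}"] split: split_indicator)
  also have "\<dots> = std_normal_density t"
    using integral_std_normal_first_moment_atLeast_nonneg[of "-t"] False
    by (simp add: std_normal_density_uminus)
  finally show ?thesis by simp
qed

text \<open>Split \<open>\<bar>t - z\<bar> = (t - z) + 2 (z - t) [z \<ge> t]\<close> and integrate term by term.\<close>

lemma integral_std_normal_abs_diff:
  "(\<integral>z. std_normal_density z * \<bar>t - z\<bar> \<partial>lborel) = 2 * std_normal_density t + t * (2 * std_Phi t - 1)"
proof -
  have "has_bochner_integral lborel (\<lambda>z. t * std_normal_density z - std_normal_density z * z
      + 2 * (std_normal_density z * z * indicator {t..} z) - 2 * t * (std_normal_density z * indicator {t..} z))
      (t * 1 - 0 + 2 * std_normal_density t - 2 * t * (1 - std_Phi t))"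
    using integrable_std_normal_moment[of 1] integral_std_normal_moment_odd[of 0]
      integrable_std_normal_first_moment_indicator[of "{t..}"] integrable_std_normal_density_indicator[of "{t..}"]
      integral_std_normal_first_moment_atLeast[of t] integral_std_normal_density_atLeast[of t]
    by (intro has_bochner_integral_diff has_bochner_integral_add has_bochner_integral_mult_right)
       (auto simp: has_bochner_integral_iff)
  moreover have "(\<lambda>z. t * std_normal_density z - std_normal_density z * z
      + 2 * (std_normal_density z * z * indicator {t..} z) - 2 * t * (std_normal_density z * indicator {t..} z))
      = (\<lambda>z. std_normal_density z * \<bar>t - z\<bar>)"
    by (auto split: split_indicator simp: algebra_simps abs_if)
  ultimately show ?thesis by (simp add: has_bochner_integral_iff algebra_simps)
qed

lemma integrable_std_normal_abs_affine:
  "integrable lborel (\<lambda>z. std_normal_density z * \<bar>m + s * z\<bar>)"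
proof (rule Bochner_Integration.integrable_bound)
  show "integrable lborel (\<lambda>z. \<bar>m\<bar> * std_normal_density z + \<bar>s\<bar> * (std_normal_density z * \<bar>z\<bar>))"
    using integrable_std_normal_moment_abs[of 1] by auto
  have "std_normal_density z * \<bar>m + s * z\<bar> \<le> std_normal_density z * (\<bar>m\<bar> + \<bar>s\<bar> * \<bar>z\<bar>)" for z
    by (intro mult_left_mono) (auto simp: abs_mult intro: abs_triangle_ineq[THEN order_trans])
  then show "AE z in lborel. norm (std_normal_density z * \<bar>m + s * z\<bar>)
      \<le> norm (\<bar>m\<bar> * std_normal_density z + \<bar>s\<bar> * (std_normal_density z * \<bar>z\<bar>))"
    by (intro AE_I2) (simp add: algebra_simps)
qed simp

lemma integral_std_normal_abs_affine:
  assumes "s > 0"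
  shows "(\<integral>z. std_normal_density z * \<bar>m + s * z\<bar> \<partial>lborel) = Mfun m (s\<^sup>2)"
proof -
  let ?c = "m / s"
  have "(\<integral>z. std_normal_density z * \<bar>m + s * z\<bar> \<partial>lborel)
      = (\<integral>z. s * (std_normal_density z * \<bar>?c + z\<bar>) \<partial>lborel)"
  proof (rule Bochner_Integration.integral_cong)
    fix z
    have "\<bar>m + s * z\<bar> = \<bar>s * (?c + z)\<bar>"
      using assms by (simp add: algebra_simps)
    then show "std_normal_density z * \<bar>m + s * z\<bar> = s * (std_normal_density z * \<bar>?c + z\<bar>)"
      using assms by (simp add: abs_mult)
  qed simp
  also have "\<dots> = s * (\<integral>z. std_normal_density (- z) * \<bar>?c - z\<bar> \<partial>lborel)"
    using lborel_integral_real_affine[of "-1" "\<lambda>z. std_normal_density z * \<bar>?c + z\<bar>" 0] by simp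
  also have "\<dots> = s * (2 * std_normal_density ?c + ?c * (2 * std_Phi ?c - 1))"
    by (simp add: std_normal_density_uminus integral_std_normal_abs_diff)
  finally show ?thesis
    using assms by (simp add: Mfun_def std_phi_def algebra_simps)
qed

lemma normal_density_affine_std:
  "s > 0 \<Longrightarrow> normal_density m s (m + s * z) = std_normal_density z / s"
  by (simp add: normal_density_def real_sqrt_mult power_mult_distrib field_simps)

lemma integral_normal_density_abs:
  assumes "s > 0"
  shows "integrable lborel (\<lambda>x. normal_density m s x * \<bar>x\<bar>)"
    and "(\<integral>x. normal_density m s x * \<bar>x\<bar> \<partial>lborel) = Mfun m (s\<^sup>2)"
proof -
  have eq: "(\<lambda>z. normal_density m s (m + s * z) * \<bar>m + s * z\<bar>)
      = (\<lambda>z. (1 / s) * (std_normal_density z * \<bar>m + s * z\<bar>))"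
    using assms by (simp add: normal_density_affine_std)
  show "integrable lborel (\<lambda>x. normal_density m s x * \<bar>x\<bar>)"
    using lborel_integrable_real_affine_iff[of s "\<lambda>x. normal_density m s x * \<bar>x\<bar>" m] assms
    by (simp add: eq integrable_std_normal_abs_affine)
  show "(\<integral>x. normal_density m s x * \<bar>x\<bar> \<partial>lborel) = Mfun m (s\<^sup>2)"
    using lborel_integral_real_affine[of s "\<lambda>x. normal_density m s x * \<bar>x\<bar>" m] assms
    by (simp add: eq integral_std_normal_abs_affine)
qed

lemma has_bochner_integral_std_normal_abs_affine:
  assumes "s > 0"
  shows "has_bochner_integral std_normal (\<lambda>z. \<bar>m + s * z\<bar>) (Mfun m (s\<^sup>2))"
  using integrable_std_normal_abs_affine[of m s] integral_std_normal_abs_affine[OF assms, of m]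
  by (simp add: has_bochner_integral_iff integrable_density integral_density)

text \<open>\<open>m + s\<^sub>1 Z\<^sub>1 - s\<^sub>2 Z\<^sub>2\<close> is normal with mean \<open>m\<close> and variance \<open>s\<^sub>1\<^sup>2 + s\<^sub>2\<^sup>2\<close>.\<close>

lemma has_bochner_integral_std_normal_pair_abs:
  assumes "s1 > 0" "s2 > 0"
  shows "has_bochner_integral (std_normal \<Otimes>\<^sub>M std_normal)
           (\<lambda>p. \<bar>m + s1 * fst p - s2 * snd p\<bar>) (Mfun m (s1\<^sup>2 + s2\<^sup>2))"
proof -
  interpret N: prob_space std_normal by (rule prob_space_std_normal)
  interpret P: pair_prob_space std_normal std_normal ..
  have "P.indep_var borel ((\<lambda>x. m + s1 * x) \<circ> fst) borel ((\<lambda>x. s2 * x) \<circ> snd)"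
    by (rule P.indep_var_compose[OF indep_var_fst_snd[OF N.prob_space_axioms N.prob_space_axioms]])
       auto
  then have indep: "P.indep_var borel (\<lambda>p. m + s1 * fst p) borel (\<lambda>p. s2 * snd p)"
    by (simp add: comp_def)
  have "distr (std_normal \<Otimes>\<^sub>M std_normal) lborel fst = distr (std_normal \<Otimes>\<^sub>M std_normal) std_normal fst"
    by (rule distr_cong) auto
  then have "distributed (std_normal \<Otimes>\<^sub>M std_normal) lborel fst std_normal_density"
    using N.distr_pair_fst[of std_normal] by (simp add: distributed_def)
  from P.normal_density_affine[OF this, of s1 m]
  have fst: "distributed (std_normal \<Otimes>\<^sub>M std_normal) lborel (\<lambda>p. m + s1 * fst p) (normal_density m s1)"
    using assms by simp
  have "distr (std_normal \<Otimes>\<^sub>M std_normal) lborel snd = distr (std_normal \<Otimes>\<^sub>M std_normal) std_normal snd"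
    by (rule distr_cong) auto
  then have "distributed (std_normal \<Otimes>\<^sub>M std_normal) lborel snd std_normal_density"
    using distr_pair_snd[OF N.prob_space_axioms N.prob_space_axioms] by (simp add: distributed_def)
  from P.normal_density_affine[OF this, of s2 0]
  have snd: "distributed (std_normal \<Otimes>\<^sub>M std_normal) lborel (\<lambda>p. s2 * snd p) (normal_density 0 s2)"
    using assms by simp
  have diff: "distributed (std_normal \<Otimes>\<^sub>M std_normal) lborel (\<lambda>p. m + s1 * fst p - s2 * snd p)
      (normal_density m (sqrt (s1\<^sup>2 + s2\<^sup>2)))"
    using P.diff_indep_normal[OF indep assms fst snd] by simp
  have "sqrt (s1\<^sup>2 + s2\<^sup>2) > 0"
    using assms by (simp add: add_pos_pos)
  then show ?thesis
    using integral_normal_density_abs[of "sqrt (s1\<^sup>2 + s2\<^sup>2)" m]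
      distributed_integrable[OF diff, of abs] distributed_integral[OF diff, of abs]
    by (simp add: has_bochner_integral_iff add_nonneg_nonneg)
qed

section \<open>Rao--Blackwellisation of the CRPS estimator\<close>

text \<open>Both laws have the same distribution function: conditionally on \<open>V = v\<close>,
  \<open>\<mu>(v) + \<sigma>(v) Z \<le> x\<close> has probability \<open>\<Phi>((x - \<mu>(v)) / \<sigma>(v))\<close>.\<close>

lemma normal_mixture_eq_distr:
  fixes Mv :: "'v measure" and \<mu> \<sigma> :: "'v \<Rightarrow> real" and F :: "real measure"
  assumes Mv: "prob_space Mv"
    and [measurable]: "\<mu> \<in> borel_measurable Mv" "\<sigma> \<in> borel_measurable Mv"
    and pos: "\<And>v. v \<in> space Mv \<Longrightarrow> \<sigma> v > 0"
    and F: "prob_space F" "sets F = sets borel"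
    and cdf_F: "\<And>x. measure F {..x} = (\<integral>v. std_Phi ((x - \<mu> v) / \<sigma> v) \<partial>Mv)"
  shows "F = distr (Mv \<Otimes>\<^sub>M std_normal) borel (\<lambda>p. \<mu> (fst p) + \<sigma> (fst p) * snd p)"
proof (rule cdf_unique)
  interpret V: prob_space Mv by (rule Mv)
  interpret N: prob_space std_normal by (rule prob_space_std_normal)
  interpret K: pair_prob_space Mv std_normal ..
  let ?K = "Mv \<Otimes>\<^sub>M std_normal" and ?h = "\<lambda>p. \<mu> (fst p) + \<sigma> (fst p) * snd p"
  show "real_distribution F"
    using F by (simp add: real_distribution_def real_distribution_axioms_def)
  show "real_distribution (distr ?K borel ?h)"
    by (simp add: real_distribution_def real_distribution_axioms_def K.prob_space_distr)
  show "cdf F = cdf (distr ?K borel ?h)"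
  proof
    fix x
    have "emeasure (distr ?K borel ?h) {..x} = emeasure ?K (?h -` {..x} \<inter> space ?K)"
      by (rule emeasure_distr) auto
    also have "\<dots> = (\<integral>\<^sup>+ v. emeasure std_normal (Pair v -` (?h -` {..x} \<inter> space ?K)) \<partial>Mv)"
      by (rule N.emeasure_pair_measure_alt) measurable
    also have "\<dots> = (\<integral>\<^sup>+ v. ennreal (std_Phi ((x - \<mu> v) / \<sigma> v)) \<partial>Mv)"
    proof (rule nn_integral_cong)
      fix v assume v: "v \<in> space Mv"
      have "Pair v -` (?h -` {..x} \<inter> space ?K) = {..(x - \<mu> v) / \<sigma> v}"
        using pos[OF v] v by (auto simp: space_pair_measure field_simps)
      then show "emeasure std_normal (Pair v -` (?h -` {..x} \<inter> space ?K))
          = ennreal (std_Phi ((x - \<mu> v) / \<sigma> v))"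
        by (simp add: emeasure_std_normal_atMost)
    qed
    also have "\<dots> = ennreal (\<integral> v. std_Phi ((x - \<mu> v) / \<sigma> v) \<partial>Mv)"
      by (rule nn_integral_eq_integral)
         (auto intro!: V.integrable_const_bound[where B=1] simp: std_Phi_nonneg std_Phi_le_1)
    finally have "measure (distr ?K borel ?h) {..x} = (\<integral> v. std_Phi ((x - \<mu> v) / \<sigma> v) \<partial>Mv)"
      by (simp add: measure_def integral_nonneg_AE std_Phi_nonneg)
    then show "cdf F x = cdf (distr ?K borel ?h) x"
      by (simp add: cdf_def cdf_F)
  qed
qed

lemma square_integral_diff_le_nn_integral:
  fixes g :: "'a \<Rightarrow> real"
  assumes "prob_space M" and g: "integrable M g"
  shows "ennreal (((\<integral>x. g x \<partial>M) - c)\<^sup>2) \<le> (\<integral>\<^sup>+ x. ennreal ((g x - c)\<^sup>2) \<partial>M)"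
proof (cases "(\<integral>\<^sup>+ x. ennreal ((g x - c)\<^sup>2) \<partial>M) = \<infinity>")
  case False
  interpret prob_space M by fact
  have [measurable]: "g \<in> borel_measurable M"
    using g by auto
  have square: "integrable M (\<lambda>x. (g x - c)\<^sup>2)"
    by (rule integrableI_nonneg) (use False in \<open>auto simp: top.not_eq_extremum\<close>)
  have "((\<integral>x. g x \<partial>M) - c)\<^sup>2 = (\<integral>x. g x - c \<partial>M)\<^sup>2"
    using g by (simp add: prob_space)
  also have "\<dots> \<le> (\<integral>x. (g x - c)\<^sup>2 \<partial>M)"
    using jensens_inequality[of "\<lambda>x. g x - c" UNIV _ _ power2] g square convex_power2 by auto
  finally show ?thesis
    using square by (simp add: nn_integral_eq_integral ennreal_leI)
qed simp

text \<open>Jensen's inequality on each fibre \<open>{w} \<times> B\<close>, then Fubini.\<close>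

lemma rao_blackwell:
  fixes g :: "'c \<Rightarrow> real" and h :: "'a \<Rightarrow> real"
  assumes A: "prob_space A" and B: "prob_space B"
    and T: "T \<in> measurable (A \<Otimes>\<^sub>M B) P" and distr_T: "distr (A \<Otimes>\<^sub>M B) P T = P"
    and g: "integrable P g"
    and h: "\<And>w. w \<in> space A \<Longrightarrow> has_bochner_integral B (\<lambda>z. g (T (w, z))) (h w)"
  shows "expect A h = expect P g" and "var_ext A h \<le> var_ext P g"
proof -
  interpret A: prob_space A by (rule A)
  interpret B: prob_space B by (rule B)
  interpret pair_prob_space A B ..
  have [measurable]: "g \<in> borel_measurable P"
    using g by auto
  have gT: "integrable (A \<Otimes>\<^sub>M B) (\<lambda>p. g (T p))"
    using has_bochner_integral_measure_preserving[OF T distr_T, of g "expect P g"] g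
    by (simp add: has_bochner_integral_iff expect_def)
  have "expect A h = (\<integral>w. (\<integral>z. g (T (w, z)) \<partial>B) \<partial>A)"
    unfolding expect_def using h by (intro Bochner_Integration.integral_cong) (auto simp: has_bochner_integral_iff)
  also have "\<dots> = (\<integral>p. g (T p) \<partial>(A \<Otimes>\<^sub>M B))"
    using integral_fst'[OF gT] by simp
  also have "\<dots> = expect P g"
    using integral_distr[OF T, of g] distr_T by (simp add: expect_def)
  finally show E: "expect A h = expect P g" .
  have "var_ext A h = (\<integral>\<^sup>+ w. ennreal ((h w - expect P g)\<^sup>2) \<partial>A)"
    unfolding var_ext_def E ..
  also have "\<dots> \<le> (\<integral>\<^sup>+ w. (\<integral>\<^sup>+ z. ennreal ((g (T (w, z)) - expect P g)\<^sup>2) \<partial>B) \<partial>A)"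
  proof (rule nn_integral_mono)
    fix w assume "w \<in> space A"
    with h have "integrable B (\<lambda>z. g (T (w, z)))" "h w = (\<integral>z. g (T (w, z)) \<partial>B)"
      by (auto simp: has_bochner_integral_iff)
    then show "ennreal ((h w - expect P g)\<^sup>2) \<le> (\<integral>\<^sup>+ z. ennreal ((g (T (w, z)) - expect P g)\<^sup>2) \<partial>B)"
      using square_integral_diff_le_nn_integral[OF B] by simp
  qed
  also have "\<dots> = (\<integral>\<^sup>+ p. ennreal ((g (T p) - expect P g)\<^sup>2) \<partial>(A \<Otimes>\<^sub>M B))"
    using T by (intro B.nn_integral_fst) (auto intro!: measurable_compose[OF T])
  also have "\<dots> = var_ext P g"
    using nn_integral_distr[OF T, of "\<lambda>x. ennreal ((g x - expect P g)\<^sup>2)"] distr_T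
    by (simp add: var_ext_def)
  finally show "var_ext A h \<le> var_ext P g" .
qed

lemma finite_draw_idx: "finite (draw_idx N)"
  by (simp add: draw_idx_def)

lemma has_bochner_integral_crps_N:
  fixes F :: "real measure"
  assumes F: "prob_space F" "sets F = sets borel" and int_F: "integrable F (\<lambda>x. x)" and "N > 0"
  shows "has_bochner_integral (PiM (draw_idx N) (\<lambda>_. F)) (crps_N N y) (crps F y)"
proof -
  interpret F: prob_space F by (rule F)
  interpret FF: pair_prob_space F F ..
  note [measurable_cong] = F(2)
  let ?P = "PiM (draw_idx N) (\<lambda>_. F)"
  let ?E1 = "\<integral>x. \<bar>x - y\<bar> \<partial>F" and ?E2 = "\<integral>x. (\<integral>x'. \<bar>x - x'\<bar> \<partial>F) \<partial>F"
  have abs_y: "has_bochner_integral F (\<lambda>x. \<bar>x - y\<bar>) ?E1"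
    using int_F by (simp add: has_bochner_integral_iff)
  have "integrable (F \<Otimes>\<^sub>M F) fst" "integrable (F \<Otimes>\<^sub>M F) snd"
    using has_bochner_integral_measure_preserving[of fst "F \<Otimes>\<^sub>M F" F, OF _ F.distr_pair_fst]
      has_bochner_integral_measure_preserving[of snd "F \<Otimes>\<^sub>M F" F, OF _ distr_pair_snd[OF F(1) F(1)]]
      int_F by (auto simp: has_bochner_integral_iff)
  then have int_diff: "integrable (F \<Otimes>\<^sub>M F) (\<lambda>p. \<bar>fst p - snd p\<bar>)"
    by auto
  have abs_diff: "has_bochner_integral (F \<Otimes>\<^sub>M F) (\<lambda>p. \<bar>fst p - snd p\<bar>) ?E2"
    using int_diff FF.integral_fst'[OF int_diff] by (simp add: has_bochner_integral_iff)
  have "has_bochner_integral ?P (crps_N N y) ((1 / real N) * (\<Sum>i<N. ?E1 - 1/2 * ?E2))"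
    unfolding crps_N_def
  proof (intro has_bochner_integral_mult_right has_bochner_integral_sum has_bochner_integral_diff)
    fix i assume "i \<in> {..<N}"
    then have i: "(i, 1) \<in> draw_idx N" "(i, 2) \<in> draw_idx N"
      by (auto simp: draw_idx_def)
    show "has_bochner_integral ?P (\<lambda>w. \<bar>w (i, 1) - y\<bar>) ?E1"
      using has_bochner_integral_PiM_component[OF F(1) i(1) abs_y] by simp
    show "has_bochner_integral ?P (\<lambda>w. \<bar>w (i, 1) - w (i, 2)\<bar>) ?E2"
      using has_bochner_integral_PiM_two_components[OF F(1) finite_draw_idx i _ abs_diff] by simp
  qed
  then show ?thesis
    using \<open>N > 0\<close> by (simp add: crps_def)
qed

lemma has_bochner_integral_crps_N_conditional:
  fixes w :: "nat \<times> nat \<Rightarrow> 'v" and \<mu> \<sigma> :: "'v \<Rightarrow> real"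
  assumes pos: "\<And>k. k \<in> draw_idx N \<Longrightarrow> \<sigma> (w k) > 0"
  shows "has_bochner_integral (PiM (draw_idx N) (\<lambda>_. std_normal))
           (\<lambda>z. crps_N N y (\<lambda>k\<in>draw_idx N. \<mu> (w k) + \<sigma> (w k) * z k)) (crps_N_RB \<mu> \<sigma> N y w)"
proof -
  let ?P = "PiM (draw_idx N) (\<lambda>_. std_normal)"
  have "has_bochner_integral ?P
     (\<lambda>z. (1 / real N) * (\<Sum>i<N. \<bar>(\<mu> (w (i, 1)) - y) + \<sigma> (w (i, 1)) * z (i, 1)\<bar>
        - 1/2 * \<bar>(\<mu> (w (i, 1)) - \<mu> (w (i, 2))) + \<sigma> (w (i, 1)) * z (i, 1) - \<sigma> (w (i, 2)) * z (i, 2)\<bar>))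
     (crps_N_RB \<mu> \<sigma> N y w)"
    unfolding crps_N_RB_def
  proof (intro has_bochner_integral_mult_right has_bochner_integral_sum has_bochner_integral_diff)
    fix i assume "i \<in> {..<N}"
    then have i: "(i, 1) \<in> draw_idx N" "(i, 2) \<in> draw_idx N"
      by (auto simp: draw_idx_def)
    show "has_bochner_integral ?P (\<lambda>z. \<bar>(\<mu> (w (i, 1)) - y) + \<sigma> (w (i, 1)) * z (i, 1)\<bar>)
        (Mfun (\<mu> (w (i, 1)) - y) ((\<sigma> (w (i, 1)))\<^sup>2))"
      using has_bochner_integral_PiM_component[OF prob_space_std_normal i(1)
          has_bochner_integral_std_normal_abs_affine[OF pos[OF i(1)]]] .
    show "has_bochner_integral ?P
        (\<lambda>z. \<bar>(\<mu> (w (i, 1)) - \<mu> (w (i, 2))) + \<sigma> (w (i, 1)) * z (i, 1) - \<sigma> (w (i, 2)) * z (i, 2)\<bar>)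
        (Mfun (\<mu> (w (i, 1)) - \<mu> (w (i, 2))) ((\<sigma> (w (i, 1)))\<^sup>2 + (\<sigma> (w (i, 2)))\<^sup>2))"
      using has_bochner_integral_PiM_two_components[OF prob_space_std_normal finite_draw_idx i _
          has_bochner_integral_std_normal_pair_abs[OF pos[OF i(1)] pos[OF i(2)]]] by simp
  qed
  then show ?thesis
    by (rule has_bochner_integral_cong[THEN iffD1, rotated 3])
       (auto simp: crps_N_def draw_idx_def algebra_simps)
qed

theorem proposition5:
  fixes Mv :: "'v measure" and \<mu> \<sigma> :: "'v \<Rightarrow> real"
    and F :: "real measure" and y :: real and N :: nat
  assumes "prob_space Mv"
    and "\<mu> \<in> borel_measurable Mv" and "\<sigma> \<in> borel_measurable Mv"
    and "\<And>v. v \<in> space Mv \<Longrightarrow> \<sigma> v > 0"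
    and "prob_space F" and "sets F = sets borel"
    and "\<And>x. measure F {..x} = (\<integral>v. std_Phi ((x - \<mu> v) / \<sigma> v) \<partial>Mv)"
    and "integrable F (\<lambda>x. x)"
    and "N > 0"
  shows "expect (PiM (draw_idx N) (\<lambda>_. Mv)) (crps_N_RB \<mu> \<sigma> N y) = crps F y \<and>
         var_ext (PiM (draw_idx N) (\<lambda>_. Mv)) (crps_N_RB \<mu> \<sigma> N y)
         \<le> var_ext (PiM (draw_idx N) (\<lambda>_. F)) (crps_N N y)"
proof -
  note Mv = assms(1) and [measurable] = assms(2,3)
  let ?I = "draw_idx N" and ?h = "\<lambda>p. \<mu> (fst p) + \<sigma> (fst p) * snd p"
  let ?T = "\<lambda>p. \<lambda>k\<in>?I. ?h (fst p k, snd p k)"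
  have F: "F = distr (Mv \<Otimes>\<^sub>M std_normal) borel ?h"
    using normal_mixture_eq_distr[OF Mv assms(2-7)] .
  have h: "?h \<in> measurable (Mv \<Otimes>\<^sub>M std_normal) borel"
    by measurable
  have MC: "has_bochner_integral (PiM ?I (\<lambda>_. F)) (crps_N N y) (crps F y)"
    using has_bochner_integral_crps_N[OF assms(5,6,8,9)] .
  have RB: "has_bochner_integral (PiM ?I (\<lambda>_. std_normal)) (\<lambda>z. crps_N N y (?T (w, z)))
      (crps_N_RB \<mu> \<sigma> N y w)" if "w \<in> space (PiM ?I (\<lambda>_. Mv))" for w
    using that assms(4) has_bochner_integral_crps_N_conditional[where N=N and w=w and \<mu>=\<mu> and \<sigma>=\<sigma> and y=y]
    by (auto simp: space_PiM)
  have "prob_space (PiM ?I (\<lambda>_. Mv))" "prob_space (PiM ?I (\<lambda>_. std_normal))"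
    using Mv prob_space_std_normal by (auto intro: prob_space_PiM)
  note rao_blackwell[OF this measurable_PiM_pair_map[OF h]
      distr_PiM_pair_map[OF Mv prob_space_std_normal finite_draw_idx h], folded F]
  then have "expect (PiM ?I (\<lambda>_. Mv)) (crps_N_RB \<mu> \<sigma> N y) = expect (PiM ?I (\<lambda>_. F)) (crps_N N y)"
    "var_ext (PiM ?I (\<lambda>_. Mv)) (crps_N_RB \<mu> \<sigma> N y) \<le> var_ext (PiM ?I (\<lambda>_. F)) (crps_N N y)"
    using MC RB by (auto simp: has_bochner_integral_iff)
  then show ?thesis
    using MC by (simp add: expect_def has_bochner_integral_iff)
qed

end
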